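(* Let $\mathcal{Y}=\{1,\dots,C\}$ be a finite label set and let $\Delta$ denote the set of probability distributions on $\mathcal{Y}$. Let $K\ge 1$, let $\mathcal{D}_1,\dots,\mathcal{D}_K$ be pairwise disjoint measurable subsets of an input space $\mathcal{X}$, and for each $k$ let $P_k$ be a probability measure on $\mathcal{X}$ with $P_k(\mathcal{D}_k)=1$. Let $q_1,\dots,q_K\ge 0$ with $\sum_{k=1}^K q_k=1$ and $P=\sum_{k=1}^K q_kP_k$. Let $\Phi^*:\mathcal{X}\to\Delta$ be measurable, and let $\Phi(\cdot;w)$, $\Phi(\cdot;w_1),\dots,\Phi(\cdot;w_K)$ be measurable maps $\mathcal{X}\to\Delta$ (a global model with parameter $w$ and local models with parameters $w_k$). Let $\delta(p,q)=\sup_{A\subseteq\mathcal{Y}}|p(A)-q(A)|$ be the total variation distance and define $\delta^\dagger(p,q):=\delta(p,q)^2$. Then $$\int \delta^\dagger(\Phi^*(x),\Phi(x;w))\,P(dx)\le L_1'+L_2',$$ where $$L_1'=\sum_{k=1}^K q_k\int_{\mathcal{D}_k} D_{KL}(\Phi^*(x)\,\|\,\Phi(x;w_k))\,P_k(dx),\qquad L_2'=\sum_{k=1}^K q_k\int_{\mathcal{D}_k} D_{KL}(\Phi(x;w_k)\,\|\,\Phi(x;w))\,P_k(dx),$$ and $D_{KL}$ denotes the Kullback–Leibler divergence (with values in $[0,\infty]$).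
   Context: This is the federated learning setting: client $k$ holds private data $\mathcal{D}_k$ drawn from distribution $P_k$, $q_k$ is the probability that a sample comes from client $k$, and $P$ is the distribution of the whole data. $\Phi^*$ is the ground-truth map, $\Phi(\cdot;w_k)$ the local models and $\Phi(\cdot;w)$ the global model, all of the same architecture and outputting probability vectors. *)

theory Defs
  imports "HOL-Probability.Probability"
begin

definition prob_simplex :: "('y::finite \<Rightarrow> real) set" where
  "prob_simplex = {p. (\<forall>y. 0 \<le> p y) \<and> (\<Sum>y\<in>UNIV. p y) = 1}"

definition tv_dist :: "('y::finite \<Rightarrow> real) \<Rightarrow> ('y \<Rightarrow> real) \<Rightarrow> real" where
  "tv_dist p q = Max ((\<lambda>A. \<bar>(\<Sum>y\<in>A. p y) - (\<Sum>y\<in>A. q y)\<bar>) ` Pow UNIV)"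

definition tv_dagger :: "('y::finite \<Rightarrow> real) \<Rightarrow> ('y \<Rightarrow> real) \<Rightarrow> real" where
  "tv_dagger p q = (tv_dist p q)\<^sup>2"

text \<open>Kullback--Leibler divergence with values in [0,\<infinity>], conventions 0 ln(0/q) = 0,
  p ln(p/0) = \<infinity> for p > 0.\<close>
definition kl_div :: "('y::finite \<Rightarrow> real) \<Rightarrow> ('y \<Rightarrow> real) \<Rightarrow> ennreal" where
  "kl_div p q =
     (if (\<exists>y. p y > 0 \<and> q y = 0) then \<infinity>
      else ennreal (\<Sum>y\<in>UNIV. if p y = 0 then 0 else p y * ln (p y / q y)))"

end

theory Submission
  imports Defs
begin

(* Pinsker's inequality 2 \<delta>(p,q)^2 \<le> D_KL(p || q), the triangle inequality for \<delta> and
   (a + b)^2 \<le> 2 a^2 + 2 b^2 give \<delta>(p,r)^2 \<le> D_KL(p || s) + D_KL(s || r) pointwise, with s the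
   local model; integrating against P_k, which is concentrated on D_k, and averaging over the
   mixture P = \<Sum> q_k P_k gives the bound.
   Pinsker's inequality is obtained by summing p ln (p/q) - p + q \<ge> 3/2 (p - q)^2 / (p + 2q)
   over the labels and bounding (\<Sum> |p - q|)^2 \<le> 3 \<Sum> (p - q)^2 / (p + 2q) by Cauchy-Schwarz. *)

lemma rational_le_ln:
  fixes t :: real
  assumes "t > 0"
  shows "(t - 1) * (5 * t + 1) / (2 * t * (t + 2)) \<le> ln t"
proof -
  define \<phi> where "\<phi> t = ln t - (t - 1) * (5 * t + 1) / (2 * t * (t + 2))" for t :: real
  define \<phi>' where "\<phi>' t = (t - 1) ^ 3 / (t\<^sup>2 * (t + 2)\<^sup>2)" for t :: real
  have deriv: "(\<phi> has_real_derivative \<phi>' s) (at s)" if "s > 0" for s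
  proof -
    have "s \<noteq> 0" "s + 2 \<noteq> 0" using that by auto
    then have "\<phi>' s = 1 / s - ((5 * s + 1 + (s - 1) * 5) * (2 * s * (s + 2))
        - (s - 1) * (5 * s + 1) * (2 * (s + 2) + 2 * s)) / (2 * s * (s + 2))\<^sup>2"
      unfolding \<phi>'_def by (simp add: divide_simps) algebra
    then show ?thesis
      unfolding \<phi>_def using that by (auto intro!: derivative_eq_intros simp: power2_eq_square)
  qed
  have "\<phi> 1 \<le> \<phi> t"
  proof (cases "1 \<le> t")
    case True
    have "0 \<le> \<phi>' s" if "1 \<le> s" for s
      using that by (simp add: \<phi>'_def)
    then show ?thesis
      by (intro deriv_nonneg_imp_mono[of 1 t \<phi> \<phi>']) (use True in \<open>auto intro!: deriv\<close>)
  next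
    case False
    have "\<phi>' s \<le> 0" if "s \<le> 1" for s
      using that by (simp add: \<phi>'_def divide_nonpos_nonneg power_le_zero_eq)
    then show ?thesis
      by (intro deriv_nonpos_imp_antimono[of t 1 \<phi> \<phi>']) (use False assms in \<open>auto intro!: deriv\<close>)
  qed
  then show ?thesis by (simp add: \<phi>_def)
qed

lemma mult_ln_divide_ge_quadratic:
  fixes p q :: real
  assumes "p > 0" "q > 0"
  shows "3 / 2 * ((p - q)\<^sup>2 / (p + 2 * q)) \<le> p * ln (p / q) - p + q"
proof -
  have "(p - q) * (5 * p + q) / (2 * (p + 2 * q)) = p * ((p / q - 1) * (5 * (p / q) + 1) / (2 * (p / q) * (p / q + 2)))"
    using assms by (simp add: divide_simps)
  also have "\<dots> \<le> p * ln (p / q)"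
    using assms by (intro mult_left_mono rational_le_ln) auto
  finally show ?thesis
    using assms by (simp add: field_simps power2_eq_square)
qed

lemma square_sum_abs_le_sum_mult_sum_divide:
  fixes a w :: "'i \<Rightarrow> real"
  assumes "finite I" and w_nonneg: "\<And>i. i \<in> I \<Longrightarrow> 0 \<le> w i"
    and w_zero: "\<And>i. i \<in> I \<Longrightarrow> w i = 0 \<Longrightarrow> a i = 0"
  shows "(\<Sum>i\<in>I. \<bar>a i\<bar>)\<^sup>2 \<le> (\<Sum>i\<in>I. w i) * (\<Sum>i\<in>I. (a i)\<^sup>2 / w i)"
proof -
  define S where "S = (\<Sum>i\<in>I. \<bar>a i\<bar>)"
  define W where "W = (\<Sum>i\<in>I. w i)"
  show ?thesis
  proof (cases "W = 0")
    case True
    then have "\<forall>i\<in>I. w i = 0" using \<open>finite I\<close> w_nonneg by (simp add: W_def sum_nonneg_eq_0_iff)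
    then show ?thesis using w_zero by simp
  next
    case False
    then have "W > 0" using w_nonneg by (simp add: W_def order_less_le sum_nonneg)
    define c where "c = S / W"
    \<comment> \<open>AM-GM: a^2/w + c^2 w \<ge> 2 c \<bar>a\<bar>; summing with c = S/W gives the claim\<close>
    have "2 * c * \<bar>a i\<bar> - c\<^sup>2 * w i \<le> (a i)\<^sup>2 / w i" if "i \<in> I" for i
    proof (cases "w i = 0")
      case False
      then have "w i > 0" using w_nonneg[OF that] by simp
      have "0 \<le> (\<bar>a i\<bar> - c * w i)\<^sup>2 / w i" using \<open>w i > 0\<close> by simp
      also have "\<dots> = (a i)\<^sup>2 / w i - 2 * c * \<bar>a i\<bar> + c\<^sup>2 * w i"
        using \<open>w i > 0\<close> by (simp add: field_simps power2_eq_square)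
      finally show ?thesis by simp
    qed (use w_zero[OF that] in simp)
    then have "(\<Sum>i\<in>I. 2 * c * \<bar>a i\<bar> - c\<^sup>2 * w i) \<le> (\<Sum>i\<in>I. (a i)\<^sup>2 / w i)"
      by (rule sum_mono)
    moreover have "(\<Sum>i\<in>I. 2 * c * \<bar>a i\<bar> - c\<^sup>2 * w i) = 2 * c * S - c\<^sup>2 * W"
      by (simp add: sum_subtractf sum_distrib_left S_def W_def)
    moreover have "2 * c * S - c\<^sup>2 * W = S\<^sup>2 / W"
      using \<open>W > 0\<close> by (simp add: c_def field_simps power2_eq_square)
    ultimately have "S\<^sup>2 / W \<le> (\<Sum>i\<in>I. (a i)\<^sup>2 / w i)" by simp
    then show ?thesis
      using \<open>W > 0\<close> by (simp add: S_def W_def pos_divide_le_eq mult.commute)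
  qed
qed

lemma abs_sum_diff_le_tv_dist:
  fixes p q :: "'y::finite \<Rightarrow> real"
  shows "\<bar>(\<Sum>y\<in>A. p y) - (\<Sum>y\<in>A. q y)\<bar> \<le> tv_dist p q"
  unfolding tv_dist_def by (intro Max_ge) auto

lemma tv_dist_leI:
  fixes p q :: "'y::finite \<Rightarrow> real"
  assumes "\<And>A. \<bar>(\<Sum>y\<in>A. p y) - (\<Sum>y\<in>A. q y)\<bar> \<le> c"
  shows "tv_dist p q \<le> c"
  unfolding tv_dist_def using assms by (intro Max.boundedI) auto

lemma tv_dist_nonneg: "0 \<le> tv_dist p q"
  using abs_sum_diff_le_tv_dist[where A = "{}" and p = p and q = q] by simp

lemma tv_dist_triangle: "tv_dist p r \<le> tv_dist p s + tv_dist s r"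
proof (rule tv_dist_leI)
  fix A
  show "\<bar>(\<Sum>y\<in>A. p y) - (\<Sum>y\<in>A. r y)\<bar> \<le> tv_dist p s + tv_dist s r"
    using abs_sum_diff_le_tv_dist[where A = A and p = p and q = s]
      abs_sum_diff_le_tv_dist[where A = A and p = s and q = r] by linarith
qed

lemma tv_dist_le_half_sum_abs:
  fixes p q :: "'y::finite \<Rightarrow> real"
  assumes "(\<Sum>y\<in>UNIV. p y) = (\<Sum>y\<in>UNIV. q y)"
  shows "tv_dist p q \<le> (\<Sum>y\<in>UNIV. \<bar>p y - q y\<bar>) / 2"
proof (rule tv_dist_leI)
  fix A :: "'y set"
  \<comment> \<open>The deviations on A and on its complement cancel, so each is half of their total.\<close>
  have "(\<Sum>y\<in>A. p y - q y) + (\<Sum>y\<in>- A. p y - q y) = 0"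
    using assms sum.Int_Diff[of UNIV "\<lambda>y. p y - q y" A] by (simp add: Compl_eq_Diff_UNIV sum_subtractf)
  moreover have "(\<Sum>y\<in>UNIV. \<bar>p y - q y\<bar>) = (\<Sum>y\<in>A. \<bar>p y - q y\<bar>) + (\<Sum>y\<in>- A. \<bar>p y - q y\<bar>)"
    using sum.Int_Diff[of UNIV "\<lambda>y. \<bar>p y - q y\<bar>" A] by (simp add: Compl_eq_Diff_UNIV)
  moreover have "\<bar>\<Sum>y\<in>A. p y - q y\<bar> \<le> (\<Sum>y\<in>A. \<bar>p y - q y\<bar>)"
    "\<bar>\<Sum>y\<in>- A. p y - q y\<bar> \<le> (\<Sum>y\<in>- A. \<bar>p y - q y\<bar>)"
    by (rule sum_abs)+
  ultimately show "\<bar>(\<Sum>y\<in>A. p y) - (\<Sum>y\<in>A. q y)\<bar> \<le> (\<Sum>y\<in>UNIV. \<bar>p y - q y\<bar>) / 2"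
    unfolding sum_subtractf[symmetric] by linarith
qed

definition kl_div_real :: "('y::finite \<Rightarrow> real) \<Rightarrow> ('y \<Rightarrow> real) \<Rightarrow> real" where
  "kl_div_real p q = (\<Sum>y\<in>UNIV. if p y = 0 then 0 else p y * ln (p y / q y))"

lemma kl_div_eq_kl_div_real:
  assumes "\<And>y. 0 < p y \<Longrightarrow> 0 < q y"
  shows "kl_div p q = ennreal (kl_div_real p q)"
  using assms by (force simp: kl_div_def kl_div_real_def)

lemma pinsker:
  fixes p q :: "'y::finite \<Rightarrow> real"
  assumes p: "p \<in> prob_simplex" and q: "q \<in> prob_simplex" and abs_cont: "\<And>y. 0 < p y \<Longrightarrow> 0 < q y"
  shows "2 * (tv_dist p q)\<^sup>2 \<le> kl_div_real p q"
proof -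
  have p_nonneg: "\<And>y. 0 \<le> p y" and p_sum: "(\<Sum>y\<in>UNIV. p y) = 1"
    and q_nonneg: "\<And>y. 0 \<le> q y" and q_sum: "(\<Sum>y\<in>UNIV. q y) = 1"
    using p q by (auto simp: prob_simplex_def)
  define S where "S = (\<Sum>y\<in>UNIV. \<bar>p y - q y\<bar>)"
  define E where "E = (\<Sum>y\<in>UNIV. (p y - q y)\<^sup>2 / (p y + 2 * q y))"
  have "tv_dist p q \<le> S / 2"
    unfolding S_def using p_sum q_sum by (intro tv_dist_le_half_sum_abs) simp
  then have "(tv_dist p q)\<^sup>2 \<le> (S / 2)\<^sup>2"
    by (intro power_mono tv_dist_nonneg)
  then have "2 * (tv_dist p q)\<^sup>2 \<le> S\<^sup>2 / 2"
    by (simp add: power_divide)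
  also have "S\<^sup>2 \<le> (\<Sum>y\<in>UNIV. p y + 2 * q y) * E"
    unfolding S_def E_def using p_nonneg q_nonneg
    by (intro square_sum_abs_le_sum_mult_sum_divide) (auto simp: add_nonneg_eq_0_iff)
  then have "S\<^sup>2 / 2 \<le> 3 / 2 * E"
    using p_sum q_sum by (simp add: sum.distrib sum_distrib_left[symmetric])
  also have "3 / 2 * E \<le> (\<Sum>y\<in>UNIV. (if p y = 0 then 0 else p y * ln (p y / q y)) - p y + q y)"
    unfolding E_def sum_distrib_left
  proof (rule sum_mono)
    fix y
    show "3 / 2 * ((p y - q y)\<^sup>2 / (p y + 2 * q y))
        \<le> (if p y = 0 then 0 else p y * ln (p y / q y)) - p y + q y"
    proof (cases "p y = 0")
      case True
      then show ?thesis using q_nonneg[of y] by (cases "q y = 0") (simp_all add: power2_eq_square)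
    next
      case False
      then have "0 < p y" using p_nonneg[of y] by simp
      then show ?thesis using False mult_ln_divide_ge_quadratic[OF _ abs_cont] by simp
    qed
  qed
  also have "\<dots> = kl_div_real p q"
    using p_sum q_sum by (simp add: kl_div_real_def sum.distrib sum_subtractf)
  finally show ?thesis .
qed

lemma kl_div_real_nonneg:
  assumes "p \<in> prob_simplex" "q \<in> prob_simplex" "\<And>y. 0 < p y \<Longrightarrow> 0 < q y"
  shows "0 \<le> kl_div_real p q"
  using pinsker[OF assms] zero_le_power2[of "tv_dist p q"] by linarith

lemma tv_dagger_le_kl_div_add:
  fixes p r s :: "'y::finite \<Rightarrow> real"
  assumes p: "p \<in> prob_simplex" and r: "r \<in> prob_simplex" and s: "s \<in> prob_simplex"
  shows "ennreal (tv_dagger p r) \<le> kl_div p s + kl_div s r"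
proof (cases "(\<exists>y. 0 < p y \<and> s y = 0) \<or> (\<exists>y. 0 < s y \<and> r y = 0)")
  case True
  then show ?thesis unfolding kl_div_def by auto
next
  case False
  have "\<And>y. 0 \<le> s y" "\<And>y. 0 \<le> r y" using r s by (auto simp: prob_simplex_def)
  with False have ps: "\<And>y. 0 < p y \<Longrightarrow> 0 < s y" and sr: "\<And>y. 0 < s y \<Longrightarrow> 0 < r y"
    by (metis order_less_le)+
  define a where "a = tv_dist p s"
  define b where "b = tv_dist s r"
  have "(tv_dist p r)\<^sup>2 \<le> (a + b)\<^sup>2"
    unfolding a_def b_def by (intro power_mono tv_dist_triangle tv_dist_nonneg)
  also have "\<dots> \<le> 2 * a\<^sup>2 + 2 * b\<^sup>2"
    using zero_le_power2[of "a - b"] by (simp add: power2_eq_square algebra_simps)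
  also have "\<dots> \<le> kl_div_real p s + kl_div_real s r"
    unfolding a_def b_def using pinsker[OF p s ps] pinsker[OF s r sr] by linarith
  finally show ?thesis
    using kl_div_real_nonneg[OF p s ps] kl_div_real_nonneg[OF s r sr]
    by (simp add: tv_dagger_def kl_div_eq_kl_div_real ps sr flip: ennreal_plus)
qed

lemma borel_measurable_tv_dagger [measurable]:
  fixes a b :: "'x \<Rightarrow> 'y::finite \<Rightarrow> real"
  assumes [measurable]: "\<And>y. (\<lambda>x. a x y) \<in> borel_measurable M" "\<And>y. (\<lambda>x. b x y) \<in> borel_measurable M"
  shows "(\<lambda>x. tv_dagger (a x) (b x)) \<in> borel_measurable M"
  unfolding tv_dagger_def tv_dist_def by measurable

lemma borel_measurable_kl_div [measurable]:
  fixes a b :: "'x \<Rightarrow> 'y::finite \<Rightarrow> real"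
  assumes [measurable]: "\<And>y. (\<lambda>x. a x y) \<in> borel_measurable M" "\<And>y. (\<lambda>x. b x y) \<in> borel_measurable M"
  shows "(\<lambda>x. kl_div (a x) (b x)) \<in> borel_measurable M"
  unfolding kl_div_def by measurable

lemma nn_integral_mixture:
  fixes u :: "'x \<Rightarrow> ennreal"
  assumes "finite I" and sets_N: "\<And>k. k \<in> I \<Longrightarrow> sets (N k) = sets P"
    and mixture: "\<And>A. A \<in> sets P \<Longrightarrow> emeasure P A = (\<Sum>k\<in>I. c k * emeasure (N k) A)"
    and "u \<in> borel_measurable P"
  shows "(\<integral>\<^sup>+ x. u x \<partial>P) = (\<Sum>k\<in>I. c k * (\<integral>\<^sup>+ x. u x \<partial>N k))"
proof -
  have borel_N: "(borel_measurable (N k) :: ('x \<Rightarrow> ennreal) set) = borel_measurable P" if "k \<in> I" for k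
    using sets_N[OF that] by (intro measurable_cong_sets) simp_all
  show ?thesis
    using \<open>u \<in> borel_measurable P\<close>
  proof (induction rule: borel_measurable_induct)
    case (cong f g)
    have "(\<integral>\<^sup>+ x. f x \<partial>N k) = (\<integral>\<^sup>+ x. g x \<partial>N k)" if "k \<in> I" for k
      using cong.hyps(3) sets_eq_imp_space_eq[OF sets_N[OF that]] by (intro nn_integral_cong) simp
    moreover have "(\<integral>\<^sup>+ x. f x \<partial>P) = (\<integral>\<^sup>+ x. g x \<partial>P)"
      using cong.hyps(3) by (intro nn_integral_cong) simp
    ultimately show ?case
      using cong.IH by simp
  next
    case (set A)
    then show ?case using sets_N mixture by (auto intro!: sum.cong)
  next
    case (mult u c')
    have u_N: "u \<in> borel_measurable (N k)" if "k \<in> I" for k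
      using \<open>u \<in> borel_measurable P\<close> borel_N[OF that] by simp
    have "(\<integral>\<^sup>+ x. c' * u x \<partial>P) = c' * (\<integral>\<^sup>+ x. u x \<partial>P)"
      using \<open>u \<in> borel_measurable P\<close> by (rule nn_integral_cmult)
    also have "\<dots> = (\<Sum>k\<in>I. c k * (c' * (\<integral>\<^sup>+ x. u x \<partial>N k)))"
      by (simp add: mult.IH sum_distrib_left mult.left_commute)
    also have "\<dots> = (\<Sum>k\<in>I. c k * (\<integral>\<^sup>+ x. c' * u x \<partial>N k))"
      using u_N by (intro sum.cong) (simp_all add: nn_integral_cmult)
    finally show ?case .
  next
    case (add u v)
    have uv_N: "u \<in> borel_measurable (N k)" "v \<in> borel_measurable (N k)" if "k \<in> I" for k
      using \<open>u \<in> borel_measurable P\<close> \<open>v \<in> borel_measurable P\<close> borel_N[OF that] by simp_all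
    have "(\<integral>\<^sup>+ x. v x + u x \<partial>P) = (\<integral>\<^sup>+ x. v x \<partial>P) + (\<integral>\<^sup>+ x. u x \<partial>P)"
      using \<open>u \<in> borel_measurable P\<close> \<open>v \<in> borel_measurable P\<close> by (simp add: nn_integral_add)
    also have "\<dots> = (\<Sum>k\<in>I. c k * (\<integral>\<^sup>+ x. v x \<partial>N k) + c k * (\<integral>\<^sup>+ x. u x \<partial>N k))"
      by (simp add: add.IH sum.distrib)
    also have "\<dots> = (\<Sum>k\<in>I. c k * (\<integral>\<^sup>+ x. v x + u x \<partial>N k))"
      using uv_N by (intro sum.cong) (simp_all add: nn_integral_add distrib_left)
    finally show ?case .
  next
    case (seq U)
    have U_N: "U i \<in> borel_measurable (N k)" if "k \<in> I" for i k
      using seq.hyps(1)[of i] borel_N[OF that] by simp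
    have "(\<integral>\<^sup>+ x. (SUP i. U i) x \<partial>P) = (SUP i. \<integral>\<^sup>+ x. U i x \<partial>P)"
      using seq.hyps by (simp add: image_comp nn_integral_monotone_convergence_SUP)
    also have "\<dots> = (SUP i. \<Sum>k\<in>I. c k * (\<integral>\<^sup>+ x. U i x \<partial>N k))"
      using seq.IH by simp
    also have "\<dots> = (\<Sum>k\<in>I. SUP i. c k * (\<integral>\<^sup>+ x. U i x \<partial>N k))"
      using \<open>incseq U\<close>
      by (intro ennreal_SUP_sum) (auto simp: incseq_def le_fun_def intro!: mult_left_mono nn_integral_mono)
    also have "\<dots> = (\<Sum>k\<in>I. c k * (\<integral>\<^sup>+ x. (SUP i. U i) x \<partial>N k))"
      using \<open>incseq U\<close> U_N
      by (intro sum.cong) (simp_all add: SUP_mult_left_ennreal image_comp nn_integral_monotone_convergence_SUP)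
    finally show ?case .
  qed
qed

lemma nn_integral_le_set_nn_integral_add:
  assumes "AE x in N. x \<in> D" and [measurable]: "D \<in> sets N" "g \<in> borel_measurable N" "h \<in> borel_measurable N"
    and le: "\<And>x. x \<in> D \<Longrightarrow> f x \<le> g x + h x"
  shows "(\<integral>\<^sup>+ x. f x \<partial>N) \<le> (\<integral>\<^sup>+ x\<in>D. g x \<partial>N) + (\<integral>\<^sup>+ x\<in>D. h x \<partial>N)"
proof -
  have "(\<integral>\<^sup>+ x. f x \<partial>N) = (\<integral>\<^sup>+ x\<in>D. f x \<partial>N)"
    using assms(1) by (intro nn_integral_cong_AE) (auto elim: eventually_mono)
  also have "\<dots> \<le> (\<integral>\<^sup>+ x\<in>D. g x + h x \<partial>N)"
    using le by (intro nn_integral_mono) (simp split: split_indicator)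
  also have "\<dots> = (\<integral>\<^sup>+ x\<in>D. g x \<partial>N) + (\<integral>\<^sup>+ x\<in>D. h x \<partial>N)"
    by (simp add: distrib_right nn_integral_add)
  finally show ?thesis .
qed

theorem proposition1:
  fixes M :: "'x measure" and Pk :: "nat \<Rightarrow> 'x measure" and P :: "'x measure"
    and D :: "nat \<Rightarrow> 'x set" and q :: "nat \<Rightarrow> real" and K :: nat
    and Phi_star :: "'x \<Rightarrow> 'y::finite \<Rightarrow> real"
    and Phi_glob :: "'x \<Rightarrow> 'y \<Rightarrow> real"
    and Phi_loc :: "nat \<Rightarrow> 'x \<Rightarrow> 'y \<Rightarrow> real"
  assumes K: "K \<ge> 1"
    and D_meas: "\<And>k. k \<in> {1..K} \<Longrightarrow> D k \<in> sets M"
    and D_disj: "\<And>k j. k \<in> {1..K} \<Longrightarrow> j \<in> {1..K} \<Longrightarrow> k \<noteq> j \<Longrightarrow> D k \<inter> D j = {}"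
    and Pk_prob: "\<And>k. k \<in> {1..K} \<Longrightarrow> prob_space (Pk k)"
    and Pk_sets: "\<And>k. k \<in> {1..K} \<Longrightarrow> sets (Pk k) = sets M"
    and Pk_D: "\<And>k. k \<in> {1..K} \<Longrightarrow> emeasure (Pk k) (D k) = 1"
    and q_nonneg: "\<And>k. k \<in> {1..K} \<Longrightarrow> q k \<ge> 0"
    and q_sum: "(\<Sum>k=1..K. q k) = 1"
    and P_sets: "sets P = sets M"
    and P_mix: "\<And>A. A \<in> sets M \<Longrightarrow> emeasure P A = (\<Sum>k=1..K. ennreal (q k) * emeasure (Pk k) A)"
    and star_meas: "\<And>y. (\<lambda>x. Phi_star x y) \<in> borel_measurable M"
    and star_simplex: "\<And>x. x \<in> space M \<Longrightarrow> Phi_star x \<in> prob_simplex"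
    and glob_meas: "\<And>y. (\<lambda>x. Phi_glob x y) \<in> borel_measurable M"
    and glob_simplex: "\<And>x. x \<in> space M \<Longrightarrow> Phi_glob x \<in> prob_simplex"
    and loc_meas: "\<And>k y. k \<in> {1..K} \<Longrightarrow> (\<lambda>x. Phi_loc k x y) \<in> borel_measurable M"
    and loc_simplex: "\<And>k x. k \<in> {1..K} \<Longrightarrow> x \<in> space M \<Longrightarrow> Phi_loc k x \<in> prob_simplex"
  shows "(\<integral>\<^sup>+ x. ennreal (tv_dagger (Phi_star x) (Phi_glob x)) \<partial>P)
    \<le> (\<Sum>k=1..K. ennreal (q k) * (\<integral>\<^sup>+ x\<in>D k. kl_div (Phi_star x) (Phi_loc k x) \<partial>Pk k))
     + (\<Sum>k=1..K. ennreal (q k) * (\<integral>\<^sup>+ x\<in>D k. kl_div (Phi_loc k x) (Phi_glob x) \<partial>Pk k))"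
proof -
  note [measurable_cong] = P_sets and [measurable] = star_meas glob_meas
  have client_bound: "(\<integral>\<^sup>+ x. tv_dagger (Phi_star x) (Phi_glob x) \<partial>Pk k)
      \<le> (\<integral>\<^sup>+ x\<in>D k. kl_div (Phi_star x) (Phi_loc k x) \<partial>Pk k)
       + (\<integral>\<^sup>+ x\<in>D k. kl_div (Phi_loc k x) (Phi_glob x) \<partial>Pk k)" if k: "k \<in> {1..K}" for k
  proof -
    interpret prob_space "Pk k" using Pk_prob[OF k] .
    note [measurable_cong] = Pk_sets[OF k] and [measurable] = D_meas[OF k] loc_meas[OF k]
    have "AE x in Pk k. x \<in> D k"
      using Pk_D[OF k] by (intro AE_prob_1) (simp add: emeasure_eq_measure)
    moreover have "D k \<subseteq> space M"
      using D_meas[OF k] by (rule sets.sets_into_space)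
    ultimately show ?thesis
      using star_simplex glob_simplex loc_simplex[OF k]
      by (intro nn_integral_le_set_nn_integral_add tv_dagger_le_kl_div_add) auto
  qed
  have "(\<integral>\<^sup>+ x. tv_dagger (Phi_star x) (Phi_glob x) \<partial>P)
      = (\<Sum>k=1..K. ennreal (q k) * (\<integral>\<^sup>+ x. tv_dagger (Phi_star x) (Phi_glob x) \<partial>Pk k))"
    using Pk_sets P_mix by (intro nn_integral_mixture) (simp_all add: P_sets)
  also have "\<dots> \<le> (\<Sum>k=1..K. ennreal (q k) * ((\<integral>\<^sup>+ x\<in>D k. kl_div (Phi_star x) (Phi_loc k x) \<partial>Pk k)
      + (\<integral>\<^sup>+ x\<in>D k. kl_div (Phi_loc k x) (Phi_glob x) \<partial>Pk k)))"
    by (intro sum_mono mult_left_mono client_bound) simp_all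
  finally show ?thesis
    by (simp add: distrib_left sum.distrib)
qed

end
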